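(* Let $n\in\mathbb{N}$, $\alpha\in(0,1)$, $p\in\left(\frac{1}{1-\alpha},+\infty\right]$, and let $q\in[1,+\infty)$ with $\frac1p+\frac1q=1$. Let $A_{n,\alpha,p}>0$ be a constant depending only on $n,\alpha,p$ such that for every $g\in BV^{\alpha,p}(\mathbb{R}^n)$ and $|D^\alpha g|$-a.e. $x\in\mathbb{R}^n$ there is $r_x>0$ with $|D^\alpha g|(B_r(x))\le A_{n,\alpha,p}\|g\|_{L^p(\mathbb{R}^n)}r^{\frac nq-\alpha}$ for all $r\in(0,r_x)$ (such a constant exists). If $f\in BV^{\alpha,p}(\mathbb{R}^n)$, then there exists a $|D^\alpha f|$-negligible set $Z^{\alpha,p}_f\subset\mathbb{R}^n$ such that $$|D^\alpha f|\le 2^{\frac nq-\alpha}\,\frac{A_{n,\alpha,p}}{\omega_{\frac nq-\alpha}}\,\|f\|_{L^p(\mathbb{R}^n)}\,\mathcal{H}^{\frac nq-\alpha}\llcorner(\mathbb{R}^n\setminus Z^{\alpha,p}_f).$$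
   Context: $\omega_\beta=\pi^{\beta/2}/\Gamma\left(\frac{\beta+2}{2}\right)$ for $\beta>0$; $\mathcal{H}^s$ is the $s$-dimensional Hausdorff measure and $\mu\llcorner E$ the restriction of a measure to $E$. Let $\mu_{n,\alpha}=2^{\alpha}\pi^{-n/2}\Gamma\left(\frac{n+\alpha+1}{2}\right)/\Gamma\left(\frac{1-\alpha}{2}\right)$ and $\operatorname{div}^\alpha\varphi(x)=\mu_{n,\alpha}\int\frac{(y-x)\cdot(\varphi(y)-\varphi(x))}{|y-x|^{n+\alpha+1}}dy$ for $\varphi\in C^\infty_c(\mathbb{R}^n;\mathbb{R}^n)$. $BV^{\alpha,p}(\mathbb{R}^n)$ is the set of $f\in L^p(\mathbb{R}^n)$ with $|D^\alpha f|(\mathbb{R}^n):=\sup\{\int f\operatorname{div}^\alpha\varphi\,dx:\varphi\in C^\infty_c(\mathbb{R}^n;\mathbb{R}^n),\ \|\varphi\|_{L^\infty}\le1\}<\infty$; $D^\alpha f$ is the unique finite $\mathbb{R}^n$-valued Radon measure with $\int f\operatorname{div}^\alpha\varphi=-\int\varphi\cdot dD^\alpha f$, and $|D^\alpha f|$ its total variation measure. *)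

theory Defs
  imports "HOL-Analysis.Analysis"
begin

definition omega :: "real \<Rightarrow> real" where
  "omega \<beta> = pi powr (\<beta> / 2) / Gamma ((\<beta> + 2) / 2)"

definition mu_const :: "nat \<Rightarrow> real \<Rightarrow> real" where
  "mu_const n \<alpha> = 2 powr \<alpha> * pi powr (- real n / 2) * Gamma ((real n + \<alpha> + 1) / 2)
                    / Gamma ((1 - \<alpha>) / 2)"

definition dirderiv :: "'a::euclidean_space \<Rightarrow> ('a \<Rightarrow> 'b::real_normed_vector) \<Rightarrow> 'a \<Rightarrow> 'b" where
  "dirderiv v g x = vector_derivative (\<lambda>t. g (x + t *\<^sub>R v)) (at 0)"

fun iter_dd :: "'a::euclidean_space list \<Rightarrow> ('a \<Rightarrow> 'b::real_normed_vector) \<Rightarrow> 'a \<Rightarrow> 'b" where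
  "iter_dd [] g = g"
| "iter_dd (v # vs) g = dirderiv v (iter_dd vs g)"

definition smooth_fun :: "('a::euclidean_space \<Rightarrow> 'b::real_normed_vector) \<Rightarrow> bool" where
  "smooth_fun g \<longleftrightarrow> (\<forall>vs. set vs \<subseteq> Basis \<longrightarrow>
      continuous_on UNIV (iter_dd vs g) \<and>
      (\<forall>v\<in>Basis. \<forall>x. (\<lambda>t. iter_dd vs g (x + t *\<^sub>R v)) differentiable (at 0)))"

definition test_field :: "('a::euclidean_space \<Rightarrow> 'a) \<Rightarrow> bool" where
  "test_field \<phi> \<longleftrightarrow> smooth_fun \<phi> \<and> compact (closure {x. \<phi> x \<noteq> 0})"

definition frac_div :: "real \<Rightarrow> ('a::euclidean_space \<Rightarrow> 'a) \<Rightarrow> 'a \<Rightarrow> real" where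
  "frac_div \<alpha> \<phi> x = mu_const DIM('a) \<alpha> *
     (\<integral>y. ((y - x) \<bullet> (\<phi> y - \<phi> x)) / norm (y - x) powr (real DIM('a) + \<alpha> + 1) \<partial>lebesgue)"

definition memLp :: "ereal \<Rightarrow> ('a::euclidean_space \<Rightarrow> real) \<Rightarrow> bool" where
  "memLp p f \<longleftrightarrow> f \<in> borel_measurable lebesgue \<and>
     (if p = \<infinity> then (\<exists>C. AE x in lebesgue. \<bar>f x\<bar> \<le> C)
      else integrable lebesgue (\<lambda>x. \<bar>f x\<bar> powr real_of_ereal p))"

definition Lp_norm :: "ereal \<Rightarrow> ('a::euclidean_space \<Rightarrow> real) \<Rightarrow> real" where
  "Lp_norm p f = (if p = \<infinity> then Inf {C. 0 \<le> C \<and> (AE x in lebesgue. \<bar>f x\<bar> \<le> C)}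
      else (\<integral>x. \<bar>f x\<bar> powr real_of_ereal p \<partial>lebesgue) powr (1 / real_of_ereal p))"

definition BV_frac :: "real \<Rightarrow> ereal \<Rightarrow> ('a::euclidean_space \<Rightarrow> real) \<Rightarrow> bool" where
  "BV_frac \<alpha> p f \<longleftrightarrow> memLp p f \<and>
     bdd_above {(\<integral>x. f x * frac_div \<alpha> \<phi> x \<partial>lebesgue) | \<phi>.
                  test_field \<phi> \<and> (\<forall>x. norm (\<phi> x) \<le> 1)}"

text \<open>mu is the total variation measure |D^alpha f| of the vector measure D^alpha f,
  represented through its polar decomposition D^alpha f = nu mu with |nu| = 1 mu-a.e.:
  mu is a finite Borel measure on R^n (hence Radon) and
  int f div^alpha phi = - int phi . d(D^alpha f) for all test fields phi.\<close>
definition is_frac_variation ::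
    "real \<Rightarrow> ('a::euclidean_space \<Rightarrow> real) \<Rightarrow> 'a measure \<Rightarrow> ('a \<Rightarrow> 'a) \<Rightarrow> bool" where
  "is_frac_variation \<alpha> f \<mu> \<nu> \<longleftrightarrow>
     sets \<mu> = sets borel \<and> finite_measure \<mu> \<and> \<nu> \<in> borel_measurable borel \<and>
     (AE x in \<mu>. norm (\<nu> x) = 1) \<and>
     (\<forall>\<phi>. test_field \<phi> \<longrightarrow>
        (\<integral>x. f x * frac_div \<alpha> \<phi> x \<partial>lebesgue) = - (\<integral>x. \<phi> x \<bullet> \<nu> x \<partial>\<mu>))"

definition hausdorff_pre :: "real \<Rightarrow> real \<Rightarrow> 'a::euclidean_space set \<Rightarrow> ennreal" where
  "hausdorff_pre s \<delta> E = (INF C \<in> {C :: nat \<Rightarrow> 'a set. E \<subseteq> (\<Union>i. C i) \<and>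
        (\<forall>i. bounded (C i) \<and> diameter (C i) \<le> \<delta>)}.
      (\<Sum>i. ennreal (omega s * (diameter (C i) / 2) powr s)))"

definition hausdorff :: "real \<Rightarrow> 'a::euclidean_space set \<Rightarrow> ennreal" where
  "hausdorff s E = (SUP \<delta> \<in> {0<..}. hausdorff_pre s \<delta> E)"

end

theory Submission
  imports Defs
begin

text \<open>If every point of \<open>E\<close> satisfies \<open>\<mu>(B\<^sub>r(x)) \<le> K r\<^sup>s\<close> for all radii below a common \<open>R\<close>,
  then any cover of \<open>E\<close> by sets \<open>C\<^sub>i\<close> of diameter \<open>< R\<close> can be replaced by closed balls centred
  in \<open>E\<close> of radius \<open>diam C\<^sub>i\<close>, whose measures are at most
  \<open>K (diam C\<^sub>i)\<^sup>s = 2\<^sup>s K / \<omega>\<^sub>s \<cdot> \<omega>\<^sub>s (diam C\<^sub>i / 2)\<^sup>s\<close>; hence \<open>\<mu> E \<le> 2\<^sup>s K / \<omega>\<^sub>s \<cdot> \<H>\<^sup>s E\<close>.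
  For pointwise radii, \<open>E\<close> is exhausted by the sets where the bound holds with radius \<open>1/(k+1)\<close>,
  which are closed because \<open>x \<mapsto> \<mu>(B\<^sub>r(x))\<close> is lower semicontinuous. For the corollary
  \<open>\<mu> = |D\<^sup>\<alpha>f|\<close>, \<open>K = A \<parallel>f\<parallel>\<^sub>p\<close> and \<open>s = n/q - \<alpha>\<close>, which is positive because \<open>p > 1/(1 - \<alpha>)\<close>.\<close>

lemma le_mult_Inf_ennreal:
  fixes z c :: ennreal
  assumes "X \<noteq> {}" "c \<noteq> top" "\<And>S. S \<in> X \<Longrightarrow> z \<le> c * S"
  shows "z \<le> c * Inf X"
proof (cases "c = 0")
  case True
  then show ?thesis using assms by auto
next
  case False
  then have "0 < c" by (simp add: zero_less_iff_neq_zero)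
  then have "z / c \<le> Inf X"
    using assms by (intro Inf_greatest) (auto intro: divide_le_posI_ennreal)
  then have "c * (z / c) \<le> c * Inf X" by (rule mult_left_mono) simp
  moreover have "c * (z / c) = z"
    using False assms(2) by (metis ennreal_mult_divide_eq mult.commute ennreal_times_divide)
  ultimately show ?thesis by simp
qed

lemma less_inverse_conjugate_exponent:
  fixes \<alpha> q :: real and p :: ereal
  assumes "\<alpha> < 1" "ereal (1 / (1 - \<alpha>)) < p" "inverse p + ereal (1 / q) = 1"
  shows "\<alpha> < 1 / q"
proof (cases p)
  case (real p')
  have "0 < 1 / (1 - \<alpha>)" using assms(1) by simp
  moreover have "1 / (1 - \<alpha>) < p'" using assms(2) real by simp
  ultimately have "0 < p'" by linarith
  with \<open>1 / (1 - \<alpha>) < p'\<close> have "1 / p' < 1 - \<alpha>"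
    using assms(1) by (simp add: field_simps)
  moreover have "1 / p' + 1 / q = 1"
    using assms(3) real \<open>0 < p'\<close> by (simp add: inverse_eq_divide)
  ultimately show ?thesis by linarith
next
  case PInf
  then show ?thesis using assms by simp
next
  case MInf
  then show ?thesis using assms(2) by simp
qed

lemma omega_pos: "0 < s \<Longrightarrow> 0 < omega s"
  unfolding omega_def by (intro divide_pos_pos Gamma_real_pos) auto

lemma Lp_norm_nonneg:
  assumes "memLp p (f :: 'a::euclidean_space \<Rightarrow> real)"
  shows "0 \<le> Lp_norm p f"
proof (cases "p = \<infinity>")
  case True
  with assms obtain C where "AE x in lebesgue. \<bar>f x\<bar> \<le> C" unfolding memLp_def by auto
  then have "max C 0 \<in> {C. 0 \<le> C \<and> (AE x in lebesgue. \<bar>f x\<bar> \<le> C)}"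
    by (auto elim: AE_mp)
  then have "{C. 0 \<le> C \<and> (AE x in lebesgue. \<bar>f x\<bar> \<le> C)} \<noteq> {}" by blast
  then have "0 \<le> Inf {C. 0 \<le> C \<and> (AE x in lebesgue. \<bar>f x\<bar> \<le> C)}"
    by (rule cInf_greatest) simp
  then show ?thesis using True unfolding Lp_norm_def by simp
next
  case False
  then show ?thesis unfolding Lp_norm_def by simp
qed

lemma ex_cover_diameter_le:
  fixes \<delta> :: real
  assumes "0 < \<delta>"
  obtains C :: "nat \<Rightarrow> 'a::euclidean_space set"
  where "(\<Union>i. C i) = UNIV" "\<And>i. bounded (C i)" "\<And>i. diameter (C i) \<le> \<delta>"
proof -
  obtain D :: "'a set" where "countable D" and D: "\<And>X. open X \<Longrightarrow> X \<noteq> {} \<Longrightarrow> \<exists>d\<in>D. d \<in> X"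
    by (erule countable_dense_setE)
  have "x \<in> (\<Union>i. cball (from_nat_into D i) (\<delta>/2))" for x
  proof -
    obtain d where "d \<in> D" "d \<in> ball x (\<delta>/2)"
      using D[of "ball x (\<delta>/2)"] assms by auto
    moreover obtain i where "from_nat_into D i = d"
      using from_nat_into_surj[OF \<open>countable D\<close> \<open>d \<in> D\<close>] by blast
    ultimately show ?thesis by (intro UN_I[of i]) (auto simp: dist_commute)
  qed
  then have "(\<Union>i. cball (from_nat_into D i) (\<delta>/2)) = UNIV" by blast
  then show thesis
    by (rule that) (use assms in auto)
qed

lemma hausdorff_pre_le_hausdorff: "0 < \<delta> \<Longrightarrow> hausdorff_pre s \<delta> E \<le> hausdorff s E"
  unfolding hausdorff_def by (intro SUP_upper) auto

lemma hausdorff_mono: "E \<subseteq> E' \<Longrightarrow> hausdorff s E \<le> hausdorff s E'"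
  unfolding hausdorff_def hausdorff_pre_def
  by (intro SUP_subset_mono INF_superset_mono) auto

lemma emeasure_ball_gt_smaller_ball:
  fixes \<mu> :: "'a::metric_space measure"
  assumes sets: "sets \<mu> = sets borel" and gt: "z < emeasure \<mu> (ball x r)"
  obtains r' where "r' < r" "z < emeasure \<mu> (ball x r')"
proof -
  define B where "B n = ball x (r - inverse (Suc n))" for n
  have "incseq B"
    unfolding B_def by (intro incseq_SucI subset_ball diff_left_mono le_imp_inverse_le) auto
  moreover have "(\<Union>n. B n) = ball x r"
  proof
    show "(\<Union>n. B n) \<subseteq> ball x r" unfolding B_def by (intro UN_least subset_ball) simp
  next
    show "ball x r \<subseteq> (\<Union>n. B n)"
    proof
      fix y assume "y \<in> ball x r"
      then obtain n where "inverse (Suc n) < r - dist x y"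
        using reals_Archimedean[of "r - dist x y"] by auto
      then show "y \<in> (\<Union>n. B n)" unfolding B_def by (intro UN_I[of n]) auto
    qed
  qed
  moreover have "range B \<subseteq> sets \<mu>" unfolding sets B_def by auto
  ultimately have "emeasure \<mu> (ball x r) = (SUP n. emeasure \<mu> (B n))"
    by (simp add: SUP_emeasure_incseq)
  with gt obtain n where "z < emeasure \<mu> (B n)" by (auto simp: less_SUP_iff)
  then show thesis by (intro that[of "r - inverse (Suc n)"]) (auto simp: B_def)
qed

lemma closed_ball_emeasure_le:
  fixes \<mu> :: "'a::metric_space measure"
  assumes sets: "sets \<mu> = sets borel"
  shows "closed {x. \<forall>r. 0 < r \<and> r < R \<longrightarrow> emeasure \<mu> (ball x r) \<le> g r}"
    (is "closed ?F")
proof -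
  have "\<exists>e>0. ball x e \<subseteq> - ?F" if "x \<notin> ?F" for x
  proof -
    from that obtain r where r: "0 < r" "r < R" "g r < emeasure \<mu> (ball x r)"
      by (auto simp: not_le)
    then obtain r' where "r' < r" and r': "g r < emeasure \<mu> (ball x r')"
      using emeasure_ball_gt_smaller_ball[OF sets] by metis
    have "ball x (r - r') \<subseteq> - ?F"
    proof
      fix y assume y: "y \<in> ball x (r - r')"
      have "ball x r' \<subseteq> ball y r"
      proof
        fix z assume "z \<in> ball x r'"
        then show "z \<in> ball y r" using y dist_triangle[of y z x] by (simp add: dist_commute)
      qed
      then have "emeasure \<mu> (ball x r') \<le> emeasure \<mu> (ball y r)"
        by (intro emeasure_mono) (auto simp: sets)
      with r r' show "y \<in> - ?F" by (auto simp: not_le intro: less_le_trans)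
    qed
    with \<open>r' < r\<close> show ?thesis by (intro exI[of _ "r - r'"]) auto
  qed
  then show ?thesis by (auto simp: closed_def open_contains_ball)
qed

lemma emeasure_cball_le_of_ball_le:
  fixes \<mu> :: "'a::metric_space measure"
  assumes sets: "sets \<mu> = sets borel" and "0 < s" "0 \<le> d" "d < R"
    and ball_le: "\<And>r. d < r \<Longrightarrow> r < R \<Longrightarrow> emeasure \<mu> (ball x r) \<le> ennreal (K * r powr s)"
  shows "emeasure \<mu> (cball x d) \<le> ennreal (K * d powr s)"
proof (rule tendsto_le[OF trivial_limit_at_right_real])
  show "((\<lambda>r. ennreal (K * r powr s)) \<longlongrightarrow> ennreal (K * d powr s)) (at_right d)"
    using assms by (intro tendsto_intros)
      (auto simp: eventually_at_right_field intro: exI[of _ "d + 1"])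
  have "\<forall>\<^sub>F r in at_right d. d < r \<and> r < R"
    using \<open>d < R\<close> by (auto simp: eventually_at_right_field intro: exI[of _ R])
  then show "\<forall>\<^sub>F r in at_right d. emeasure \<mu> (cball x d) \<le> ennreal (K * r powr s)"
  proof eventually_elim
    case (elim r)
    then have "emeasure \<mu> (cball x d) \<le> emeasure \<mu> (ball x r)"
      by (intro emeasure_mono) (auto simp: sets)
    also have "\<dots> \<le> ennreal (K * r powr s)" using elim ball_le by blast
    finally show ?case .
  qed
qed simp

lemma emeasure_le_suminf_diameter_powr:
  fixes \<mu> :: "'a::metric_space measure"
  assumes sets: "sets \<mu> = sets borel" and "0 < s" and "\<delta> < R"
    and ball_le: "\<And>x r. x \<in> E \<Longrightarrow> 0 < r \<Longrightarrow> r < R \<Longrightarrow> emeasure \<mu> (ball x r) \<le> ennreal (K * r powr s)"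
    and cover: "E \<subseteq> (\<Union>i. C i)" "\<And>i. bounded (C i)" "\<And>i. diameter (C i) \<le> \<delta>"
  shows "emeasure \<mu> E \<le> (\<Sum>i. ennreal (K * diameter (C i) powr s))"
proof -
  define D where "D i = (if C i \<inter> E = {} then {} else cball (SOME x. x \<in> C i \<inter> E) (diameter (C i)))"
    for i
  have "E \<subseteq> (\<Union>i. D i)"
  proof
    fix y assume "y \<in> E"
    with cover(1) obtain i where "y \<in> C i" by blast
    with \<open>y \<in> E\<close> have "(SOME x. x \<in> C i \<inter> E) \<in> C i \<inter> E" by (metis IntI someI)
    with \<open>y \<in> C i\<close> have "y \<in> D i"
      using \<open>y \<in> E\<close> diameter_bounded_bound[OF cover(2)] by (auto simp: D_def)
    then show "y \<in> (\<Union>i. D i)" by blast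
  qed
  then have "emeasure \<mu> E \<le> emeasure \<mu> (\<Union>i. D i)"
    by (intro emeasure_mono) (auto simp: sets D_def)
  also have "\<dots> \<le> (\<Sum>i. emeasure \<mu> (D i))"
    by (intro emeasure_subadditive_countably) (auto simp: sets D_def)
  also have "\<dots> \<le> (\<Sum>i. ennreal (K * diameter (C i) powr s))"
  proof (intro suminf_le summableI)
    fix i
    show "emeasure \<mu> (D i) \<le> ennreal (K * diameter (C i) powr s)"
    proof (cases "C i \<inter> E = {}")
      case False
      define x where "x = (SOME x. x \<in> C i \<inter> E)"
      have "x \<in> E" using False unfolding x_def by (metis IntE some_in_eq)
      moreover have "0 \<le> diameter (C i)" "diameter (C i) < R"
        using cover(2,3)[of i] \<open>\<delta> < R\<close> by (auto simp: diameter_ge_0)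
      ultimately have "emeasure \<mu> (cball x (diameter (C i))) \<le> ennreal (K * diameter (C i) powr s)"
        using ball_le by (intro emeasure_cball_le_of_ball_le[OF sets \<open>0 < s\<close>]) auto
      then show ?thesis using False by (simp add: D_def x_def)
    qed (simp add: D_def)
  qed
  finally show ?thesis .
qed

lemma emeasure_le_hausdorff_of_uniform_ball_le:
  fixes \<mu> :: "'a::euclidean_space measure"
  assumes sets: "sets \<mu> = sets borel" and s: "0 < s" and K: "0 \<le> K" and "0 < R"
    and ball_le: "\<And>x r. x \<in> E \<Longrightarrow> 0 < r \<Longrightarrow> r < R \<Longrightarrow> emeasure \<mu> (ball x r) \<le> ennreal (K * r powr s)"
  shows "emeasure \<mu> E \<le> ennreal (2 powr s * K / omega s) * hausdorff s E"
proof -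
  define c where "c = 2 powr s * K / omega s"
  define \<delta> where "\<delta> = R / 2"
  have "0 < \<delta>" "\<delta> < R" using \<open>0 < R\<close> by (auto simp: \<delta>_def)
  let ?Cov = "{C :: nat \<Rightarrow> 'a set. E \<subseteq> (\<Union>i. C i) \<and> (\<forall>i. bounded (C i) \<and> diameter (C i) \<le> \<delta>)}"
  let ?S = "\<lambda>C::nat \<Rightarrow> 'a set. (\<Sum>i. ennreal (omega s * (diameter (C i) / 2) powr s))"
  have "emeasure \<mu> E \<le> ennreal c * Inf (?S ` ?Cov)"
  proof (rule le_mult_Inf_ennreal)
    obtain C :: "nat \<Rightarrow> 'a set" where "(\<Union>i. C i) = UNIV" "\<And>i. bounded (C i)" "\<And>i. diameter (C i) \<le> \<delta>"
      using ex_cover_diameter_le[OF \<open>0 < \<delta>\<close>] by blast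
    then show "?S ` ?Cov \<noteq> {}" by blast
  next
    fix S assume "S \<in> ?S ` ?Cov"
    then obtain C where C: "C \<in> ?Cov" and S: "S = ?S C" by blast
    have "ennreal (K * diameter (C i) powr s)
            = ennreal c * ennreal (omega s * (diameter (C i) / 2) powr s)" for i
    proof -
      have "0 \<le> diameter (C i)" using C by (auto intro: diameter_ge_0)
      then have "K * diameter (C i) powr s = c * (omega s * (diameter (C i) / 2) powr s)"
        using omega_pos[OF s] by (simp add: c_def powr_divide field_simps)
      then show ?thesis
        using K omega_pos[OF s] by (simp add: c_def ennreal_mult[symmetric])
    qed
    then have "(\<Sum>i. ennreal (K * diameter (C i) powr s)) = ennreal c * S"
      by (simp add: S)
    moreover have "emeasure \<mu> E \<le> (\<Sum>i. ennreal (K * diameter (C i) powr s))"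
      using C by (intro emeasure_le_suminf_diameter_powr[OF sets s \<open>\<delta> < R\<close> ball_le]) auto
    ultimately show "emeasure \<mu> E \<le> ennreal c * S" by simp
  qed simp
  also have "Inf (?S ` ?Cov) = hausdorff_pre s \<delta> E" unfolding hausdorff_pre_def by simp
  also have "\<dots> \<le> hausdorff s E" using \<open>0 < \<delta>\<close> by (rule hausdorff_pre_le_hausdorff)
  finally show ?thesis by (simp add: c_def mult_left_mono)
qed

lemma emeasure_le_hausdorff_of_ball_le:
  fixes \<mu> :: "'a::euclidean_space measure"
  assumes sets: "sets \<mu> = sets borel" and s: "0 < s" and K: "0 \<le> K" and E: "E \<in> sets borel"
    and ball_le: "\<And>x. x \<in> E \<Longrightarrow>
      \<exists>rx>0. \<forall>r. 0 < r \<and> r < rx \<longrightarrow> emeasure \<mu> (ball x r) \<le> ennreal (K * r powr s)"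
  shows "emeasure \<mu> E \<le> ennreal (2 powr s * K / omega s) * hausdorff s E"
proof -
  define F where "F k = {x. \<forall>r. 0 < r \<and> r < 1 / Suc k \<longrightarrow> emeasure \<mu> (ball x r) \<le> ennreal (K * r powr s)}"
    for k :: nat
  have "range (\<lambda>k. E \<inter> F k) \<subseteq> sets \<mu>"
    using E closed_ball_emeasure_le[OF sets] unfolding sets F_def by auto
  moreover have "incseq (\<lambda>k. E \<inter> F k)"
  proof (intro incseq_SucI)
    fix k
    have "1 / Suc (Suc k) \<le> 1 / Suc k" by (simp add: frac_le)
    then show "E \<inter> F k \<subseteq> E \<inter> F (Suc k)" by (auto simp: F_def)
  qed
  moreover have "(\<Union>k. E \<inter> F k) = E"
  proof (intro subset_antisym subsetI)
    fix x assume "x \<in> E"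
    with ball_le obtain rx where "rx > 0"
      and rx: "\<forall>r. 0 < r \<and> r < rx \<longrightarrow> emeasure \<mu> (ball x r) \<le> ennreal (K * r powr s)"
      by blast
    then obtain k where "1 / Suc k < rx" by (metis reals_Archimedean inverse_eq_divide)
    with rx \<open>x \<in> E\<close> show "x \<in> (\<Union>k. E \<inter> F k)" by (intro UN_I[of k]) (auto simp: F_def)
  qed auto
  ultimately have "emeasure \<mu> E = (SUP k. emeasure \<mu> (E \<inter> F k))"
    by (simp add: SUP_emeasure_incseq)
  also have "\<dots> \<le> ennreal (2 powr s * K / omega s) * hausdorff s E"
  proof (rule SUP_least)
    fix k
    have "emeasure \<mu> (E \<inter> F k) \<le> ennreal (2 powr s * K / omega s) * hausdorff s (E \<inter> F k)"
      by (rule emeasure_le_hausdorff_of_uniform_ball_le[OF sets s K, of "1 / Suc k"])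
        (auto simp: F_def)
    also have "\<dots> \<le> ennreal (2 powr s * K / omega s) * hausdorff s E"
      by (intro mult_left_mono hausdorff_mono) auto
    finally show "emeasure \<mu> (E \<inter> F k) \<le> ennreal (2 powr s * K / omega s) * hausdorff s E" .
  qed
  finally show ?thesis .
qed

theorem corollary4p4:
  fixes \<alpha> q A :: real and p :: ereal and f :: "'a::euclidean_space \<Rightarrow> real"
    and \<mu> :: "'a measure" and \<nu> :: "'a \<Rightarrow> 'a"
  assumes alpha: "0 < \<alpha>" "\<alpha> < 1"
    and p: "ereal (1 / (1 - \<alpha>)) < p"
    and q: "1 \<le> q" "inverse p + ereal (1 / q) = 1"
    and A_pos: "0 < A"
    and A: "\<And>(g :: 'a \<Rightarrow> real) \<mu>g \<nu>g. BV_frac \<alpha> p g \<Longrightarrow> is_frac_variation \<alpha> g \<mu>g \<nu>g \<Longrightarrow>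
              AE x in \<mu>g. \<exists>rx>0. \<forall>r. 0 < r \<and> r < rx \<longrightarrow>
                emeasure \<mu>g (ball x r)
                  \<le> ennreal (A * Lp_norm p g * r powr (real DIM('a) / q - \<alpha>))"
    and f: "BV_frac \<alpha> p f"
    and Df: "is_frac_variation \<alpha> f \<mu> \<nu>"
  shows "\<exists>Z. (\<exists>N \<in> null_sets \<mu>. Z \<subseteq> N) \<and>
           (\<forall>B \<in> sets borel. emeasure \<mu> B \<le>
              ennreal (2 powr (real DIM('a) / q - \<alpha>) * A / omega (real DIM('a) / q - \<alpha>)
                       * Lp_norm p f)
              * hausdorff (real DIM('a) / q - \<alpha>) (B - Z))"
proof -
  define s where "s = real DIM('a) / q - \<alpha>"
  have sets: "sets \<mu> = sets borel" using Df unfolding is_frac_variation_def by simp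
  have "\<alpha> < 1 / q" using less_inverse_conjugate_exponent alpha(2) p q(2) by blast
  moreover have "1 / q \<le> real DIM('a) / q" using q(1) by (simp add: divide_right_mono)
  ultimately have s: "0 < s" unfolding s_def by linarith
  have K: "0 \<le> A * Lp_norm p f"
    using A_pos Lp_norm_nonneg[of p f] f unfolding BV_frac_def by simp
  obtain N where N: "N \<in> null_sets \<mu>" and ball_le: "\<And>x. x \<in> space \<mu> - N \<Longrightarrow>
      \<exists>rx>0. \<forall>r. 0 < r \<and> r < rx \<longrightarrow> emeasure \<mu> (ball x r) \<le> ennreal (A * Lp_norm p f * r powr s)"
    using AE_E3[OF A[OF f Df]] unfolding s_def by blast
  have "emeasure \<mu> B \<le> ennreal (2 powr s * (A * Lp_norm p f) / omega s) * hausdorff s (B - N)"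
    if "B \<in> sets borel" for B
  proof -
    have "emeasure \<mu> B = emeasure \<mu> (B - N)" using that N sets by (simp add: emeasure_Diff_null_set)
    also have "\<dots> \<le> ennreal (2 powr s * (A * Lp_norm p f) / omega s) * hausdorff s (B - N)"
      using that N sets_eq_imp_space_eq[OF sets] ball_le
      by (intro emeasure_le_hausdorff_of_ball_le[OF sets s K]) (auto simp: sets)
    finally show ?thesis .
  qed
  then show ?thesis using N unfolding s_def by (auto simp: mult_ac)
qed

end
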